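(* Let $G_1$ and $G_2$ be two vertex-disjoint simple connected graphs with $|V(G_1)|=n_1$, $|V(G_2)|=n_2$, $|E(G_1)|=m_1$, $|E(G_2)|=m_2$. Then the edge T-join $G_1\underline{\vee}_T G_2$ satisfies \[ F(G_1\underline{\vee}_T G_2)=8F(G_1)+F(G_2)+3n_2^{2}M_1(G_1)+3m_1M_1(G_2)+M_4(G_1)+3n_2\,HM(G_1)+3\,ReZM(G_1)+m_1^{2}(6m_2+m_1n_2)+m_1n_2^{3}. \]
   Context: For a simple graph $G$ and $v\in V(G)$, $d_G(v)$ is the degree of $v$. Define $M_1(G)=\sum_{v\in V(G)}d_G(v)^2$, $F(G)=\sum_{v\in V(G)}d_G(v)^3$, $M_4(G)=\sum_{v\in V(G)}d_G(v)^4$, $HM(G)=\sum_{uv\in E(G)}[d_G(u)+d_G(v)]^2$, and $ReZM(G)=\sum_{uv\in E(G)}d_G(u)d_G(v)\,[d_G(u)+d_G(v)]$. The total graph $T(G)$ is obtained from $G$ (keeping all edges of $G$) by inserting a new vertex for each edge of $G$, joining each new vertex to the two end vertices of its edge, and joining by an edge each pair of new vertices corresponding to adjacent edges of $G$ (edges sharing an end vertex); let $I(G)$ denote the set of these new vertices, so $V(T(G))=V(G)\cup I(G)$. The edge T-join $G_1\underline{\vee}_T G_2$ is the graph obtained from $T(G_1)$ and $G_2$ (taken vertex-disjoint) by joining each vertex of $I(G_1)$ to every vertex of $G_2$ by an edge. *)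

theory Defs
  imports Main
begin

type_synonym 'a graph = "'a set \<times> 'a set set"

definition verts :: "'a graph \<Rightarrow> 'a set" where "verts G = fst G"
definition edges :: "'a graph \<Rightarrow> 'a set set" where "edges G = snd G"

definition simple_graph :: "'a graph \<Rightarrow> bool" where
  "simple_graph G \<longleftrightarrow> finite (verts G) \<and>
     (\<forall>e\<in>edges G. \<exists>u v. u \<in> verts G \<and> v \<in> verts G \<and> u \<noteq> v \<and> e = {u, v})"

definition connected_graph :: "'a graph \<Rightarrow> bool" where
  "connected_graph G \<longleftrightarrow> verts G \<noteq> {} \<and>
     (\<forall>u\<in>verts G. \<forall>v\<in>verts G. (u, v) \<in> {(x, y). {x, y} \<in> edges G}\<^sup>*)"

definition degree :: "'a graph \<Rightarrow> 'a \<Rightarrow> nat" where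
  "degree G v = card {e \<in> edges G. v \<in> e}"

definition M1 :: "'a graph \<Rightarrow> nat" where
  "M1 G = (\<Sum>v\<in>verts G. degree G v ^ 2)"

definition Fidx :: "'a graph \<Rightarrow> nat" where
  "Fidx G = (\<Sum>v\<in>verts G. degree G v ^ 3)"

definition M4 :: "'a graph \<Rightarrow> nat" where
  "M4 G = (\<Sum>v\<in>verts G. degree G v ^ 4)"

definition HM :: "'a graph \<Rightarrow> nat" where
  "HM G = (\<Sum>e\<in>edges G. (\<Sum>v\<in>e. degree G v) ^ 2)"

definition ReZM :: "'a graph \<Rightarrow> nat" where
  "ReZM G = (\<Sum>e\<in>edges G. (\<Prod>v\<in>e. degree G v) * (\<Sum>v\<in>e. degree G v))"

text \<open>Total graph: original vertices are tagged Inl, edge-vertices (the set I(G)) are tagged Inr.\<close>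

definition total_graph :: "'a graph \<Rightarrow> ('a + 'a set) graph" where
  "total_graph G =
    (Inl ` verts G \<union> Inr ` edges G,
     (\<lambda>e. Inl ` e) ` edges G
     \<union> {{Inl v, Inr e} | v e. e \<in> edges G \<and> v \<in> e}
     \<union> {{Inr e, Inr f} | e f. e \<in> edges G \<and> f \<in> edges G \<and> e \<noteq> f \<and> e \<inter> f \<noteq> {}})"

definition edge_T_join :: "'a graph \<Rightarrow> 'b graph \<Rightarrow> (('a + 'a set) + 'b) graph" where
  "edge_T_join G1 G2 =
    (Inl ` verts (total_graph G1) \<union> Inr ` verts G2,
     (\<lambda>e. Inl ` e) ` edges (total_graph G1)
     \<union> (\<lambda>e. Inr ` e) ` edges G2
     \<union> {{Inl (Inr e), Inr w} | e w. e \<in> edges G1 \<and> w \<in> verts G2})"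

end

theory Submission
  imports Defs
begin

(* Every vertex of the join has its degree given by a simple formula: an original vertex v
of G1 has degree 2 d(v), the vertex of an edge uv of G1 has degree d(u) + d(v) + n2, and a
vertex w of G2 has degree d(w) + m1. Expanding the cubes and summing, the sums over edges are
converted to sums over vertices by the handshake identity, which produces M1 and M4, while the
cross term of (d(u) + d(v))^3 yields ReZM. *)

lemma mult_3: "3 * (z::'a::semiring_1) = z + z + z"
proof -
  have "(3::'a) = 2 + 1" by simp
  then show ?thesis by (simp only: distrib_right mult_2 mult_1)
qed

lemma power3_sum_card_2:
  fixes f :: "'a \<Rightarrow> 'b::comm_semiring_1"
  assumes "card e = 2"
  shows "(\<Sum>x\<in>e. f x) ^ 3 = (\<Sum>x\<in>e. f x ^ 3) + 3 * ((\<Prod>x\<in>e. f x) * (\<Sum>x\<in>e. f x))"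
proof -
  obtain u v where "u \<noteq> v" "e = {u, v}" using assms by (metis card_2_iff)
  then show ?thesis unfolding mult_3 power3_eq_cube by (simp add: algebra_simps)
qed

lemma sum_power3_add_const:
  fixes f :: "'a \<Rightarrow> 'b::comm_semiring_1"
  shows "(\<Sum>x\<in>A. (f x + c) ^ 3) = (\<Sum>x\<in>A. f x ^ 3) + 3 * c * (\<Sum>x\<in>A. f x ^ 2)
      + 3 * c ^ 2 * (\<Sum>x\<in>A. f x) + of_nat (card A) * c ^ 3"
proof -
  have "(f x + c) ^ 3 = f x ^ 3 + 3 * c * f x ^ 2 + 3 * c ^ 2 * f x + c ^ 3" for x
    unfolding mult_3 power3_eq_cube power2_eq_square by (simp add: algebra_simps)
  then show ?thesis by (simp add: sum.distrib sum_distrib_left)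
qed

lemma incident_edges_image:
  assumes "inj f"
  shows "card {x \<in> (\<lambda>e. f ` e) ` E. f v \<in> x} = card {e \<in> E. v \<in> e}"
proof -
  have "{x \<in> (\<lambda>e. f ` e) ` E. f v \<in> x} = (\<lambda>e. f ` e) ` {e \<in> E. v \<in> e}"
    using assms by (auto simp: inj_eq)
  moreover have "inj_on (\<lambda>e. f ` e) {e \<in> E. v \<in> e}"
    using assms by (simp add: inj_on_def inj_image_eq_iff)
  ultimately show ?thesis by (simp add: card_image)
qed

lemma simple_graph_edgeE:
  assumes "simple_graph G" "e \<in> edges G"
  obtains u v where "u \<in> verts G" "v \<in> verts G" "u \<noteq> v" "e = {u, v}"
  using assms unfolding simple_graph_def by blast

lemma simple_graph_edge_subset:
  assumes "simple_graph G" "e \<in> edges G"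
  shows "e \<subseteq> verts G"
  using assms by (metis simple_graph_edgeE empty_subsetI insert_subset)

lemma simple_graph_card_edge:
  assumes "simple_graph G" "e \<in> edges G"
  shows "card e = 2"
  using assms by (metis simple_graph_edgeE card_2_iff)

lemma simple_graph_finite_edges:
  assumes "simple_graph G"
  shows "finite (edges G)"
proof -
  have "edges G \<subseteq> Pow (verts G)"
    using simple_graph_edge_subset[OF assms] by blast
  then show ?thesis
    using assms by (meson simple_graph_def finite_Pow_iff finite_subset)
qed

lemma sum_edges_sum_ends:
  fixes f :: "'a \<Rightarrow> 'b::comm_semiring_1"
  assumes "simple_graph G"
  shows "(\<Sum>e\<in>edges G. \<Sum>v\<in>e. f v) = (\<Sum>v\<in>verts G. of_nat (degree G v) * f v)"
proof -
  have fV: "finite (verts G)" using assms by (simp add: simple_graph_def)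
  have fE: "finite (edges G)" using simple_graph_finite_edges[OF assms] .
  have "(\<Sum>e\<in>edges G. \<Sum>v\<in>e. f v) = (\<Sum>e\<in>edges G. \<Sum>v\<in>verts G. if v \<in> e then f v else 0)"
  proof (rule sum.cong[OF refl])
    fix e assume "e \<in> edges G"
    then have "verts G \<inter> e = e" using simple_graph_edge_subset[OF assms] by blast
    then show "(\<Sum>v\<in>e. f v) = (\<Sum>v\<in>verts G. if v \<in> e then f v else 0)"
      using sum.inter_restrict[OF fV, of f e] by simp
  qed
  also have "\<dots> = (\<Sum>v\<in>verts G. \<Sum>e\<in>edges G. if v \<in> e then f v else 0)"
    by (rule sum.swap)
  also have "\<dots> = (\<Sum>v\<in>verts G. of_nat (degree G v) * f v)"
    by (rule sum.cong[OF refl]) (simp flip: sum.inter_filter[OF fE] add: degree_def)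
  finally show ?thesis .
qed

lemma sum_degree:
  assumes "simple_graph G"
  shows "(\<Sum>v\<in>verts G. degree G v) = 2 * card (edges G)"
  using sum_edges_sum_ends[OF assms, of "\<lambda>_. 1::nat"]
  by (simp add: simple_graph_card_edge[OF assms])

lemma sum_edges_degree_sum:
  assumes "simple_graph G"
  shows "(\<Sum>e\<in>edges G. \<Sum>v\<in>e. degree G v) = M1 G"
  using sum_edges_sum_ends[OF assms, of "degree G"] by (simp add: M1_def power2_eq_square)

lemma sum_edges_degree_cubes:
  assumes "simple_graph G"
  shows "(\<Sum>e\<in>edges G. \<Sum>v\<in>e. degree G v ^ 3) = M4 G"
  using sum_edges_sum_ends[OF assms, of "\<lambda>v. degree G v ^ 3"]
  by (simp add: M4_def numeral_eq_Suc)

lemma sum_edges_degree_sum_cubed: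
  assumes "simple_graph G"
  shows "(\<Sum>e\<in>edges G. (\<Sum>v\<in>e. degree G v) ^ 3) = M4 G + 3 * ReZM G"
  by (simp add: power3_sum_card_2 simple_graph_card_edge[OF assms] sum.distrib
      sum_distrib_left sum_edges_degree_cubes[OF assms] ReZM_def)

lemma sum_cube_double_degree:
  "(\<Sum>v\<in>verts G. (2 * degree G v) ^ 3) = 8 * Fidx G"
  by (simp add: Fidx_def sum_distrib_left power_mult_distrib)

lemma sum_edges_cube_degree_sum_add:
  assumes "simple_graph G"
  shows "(\<Sum>e\<in>edges G. ((\<Sum>x\<in>e. degree G x) + n) ^ 3)
      = M4 G + 3 * ReZM G + 3 * n * HM G + 3 * n ^ 2 * M1 G + card (edges G) * n ^ 3"
  by (simp add: sum_power3_add_const sum_edges_degree_sum_cubed[OF assms]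
      sum_edges_degree_sum[OF assms] HM_def)

lemma sum_cube_degree_add:
  assumes "simple_graph G"
  shows "(\<Sum>v\<in>verts G. (degree G v + m) ^ 3)
      = Fidx G + 3 * m * M1 G + 6 * m ^ 2 * card (edges G) + card (verts G) * m ^ 3"
  by (simp add: sum_power3_add_const sum_degree[OF assms] Fidx_def M1_def)

lemma verts_total_graph: "verts (total_graph G) = Inl ` verts G \<union> Inr ` edges G"
  by (simp add: verts_def total_graph_def)

lemma edges_total_graph: "edges (total_graph G) =
     (\<lambda>e. Inl ` e) ` edges G
     \<union> {{Inl v, Inr e} | v e. e \<in> edges G \<and> v \<in> e}
     \<union> {{Inr e, Inr f} | e f. e \<in> edges G \<and> f \<in> edges G \<and> e \<noteq> f \<and> e \<inter> f \<noteq> {}}"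
  by (simp add: edges_def total_graph_def)

lemma finite_edges_total_graph:
  assumes "simple_graph G"
  shows "finite (edges (total_graph G))"
proof -
  have fE: "finite (edges G)" using simple_graph_finite_edges[OF assms] .
  have "finite (verts G)" using assms by (simp add: simple_graph_def)
  then have "finite ((\<lambda>(v, e). {Inl v, Inr e}) ` (verts G \<times> edges G))"
    using fE by simp
  moreover have "{{Inl v, Inr e} | v e. e \<in> edges G \<and> v \<in> e}
      \<subseteq> (\<lambda>(v, e). {Inl v, Inr e}) ` (verts G \<times> edges G)"
    using simple_graph_edge_subset[OF assms] by blast
  moreover have "finite ((\<lambda>(e, f). {Inr e, Inr f}) ` (edges G \<times> edges G))"
    using fE by simp
  moreover have "{{Inr e, Inr f} | e f. e \<in> edges G \<and> f \<in> edges G \<and> e \<noteq> f \<and> e \<inter> f \<noteq> {}}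
      \<subseteq> (\<lambda>(e, f). {Inr e, Inr f}) ` (edges G \<times> edges G)"
    by auto
  ultimately show ?thesis
    unfolding edges_total_graph using fE by (blast intro: finite_subset)
qed

lemma degree_total_graph_Inl:
  assumes "simple_graph G"
  shows "degree (total_graph G) (Inl v) = 2 * degree G v"
proof -
  let ?A = "{e \<in> edges G. v \<in> e}"
  have incident: "{x \<in> edges (total_graph G). Inl v \<in> x}
      = (\<lambda>e. Inl ` e) ` ?A \<union> (\<lambda>e. {Inl v, Inr e}) ` ?A"
    unfolding edges_total_graph by auto
  have "card ((\<lambda>e. Inl ` e) ` ?A) = card ?A"
    by (rule card_image) (simp add: inj_on_def inj_image_eq_iff)
  moreover have "card ((\<lambda>e. {Inl v, Inr e}) ` ?A) = card ?A"
    by (rule card_image) (auto simp: inj_on_def doubleton_eq_iff)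
  moreover have "finite ?A" using simple_graph_finite_edges[OF assms] by simp
  ultimately show ?thesis unfolding degree_def incident
    by (subst card_Un_disjoint) auto
qed

lemma incident_edges_total_graph_Inr:
  assumes "e \<in> edges G" "e = {u, v}"
  shows "{x \<in> edges (total_graph G). Inr e \<in> x} = {{Inl u, Inr e}, {Inl v, Inr e}}
      \<union> (\<lambda>f. {Inr e, Inr f}) ` ({f \<in> edges G. u \<in> f} \<union> {f \<in> edges G. v \<in> f} - {e})"
proof -
  have none: "{x \<in> (\<lambda>e. Inl ` e) ` edges G. Inr e \<in> x} = {}" by auto
  have ends: "{x \<in> {{Inl w, Inr f} | w f. f \<in> edges G \<and> w \<in> f}. Inr e \<in> x}
      = {{Inl u, Inr e}, {Inl v, Inr e}}"
  proof (intro equalityI subsetI)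
    fix x assume "x \<in> {x \<in> {{Inl w, Inr f} | w f. f \<in> edges G \<and> w \<in> f}. Inr e \<in> x}"
    then obtain w f where "f \<in> edges G" "w \<in> f" "x = {Inl w, Inr f}" "Inr e \<in> x" by blast
    then show "x \<in> {{Inl u, Inr e}, {Inl v, Inr e}}" using assms(2) by auto
  qed (use assms in auto)
  have adj: "{x \<in> {{Inr e1, Inr f1} | e1 f1. e1 \<in> edges G \<and> f1 \<in> edges G \<and> e1 \<noteq> f1 \<and> e1 \<inter> f1 \<noteq> {}}. Inr e \<in> x}
      = (\<lambda>f. {Inr e, Inr f}) ` ({f \<in> edges G. u \<in> f} \<union> {f \<in> edges G. v \<in> f} - {e})"
  proof (intro equalityI subsetI)
    fix x assume "x \<in> {x \<in> {{Inr e1, Inr f1} | e1 f1. e1 \<in> edges G \<and> f1 \<in> edges G \<and> e1 \<noteq> f1 \<and> e1 \<inter> f1 \<noteq> {}}. Inr e \<in> x}"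
    then obtain e1 f1 where "e1 \<in> edges G" "f1 \<in> edges G" "e1 \<noteq> f1" "e1 \<inter> f1 \<noteq> {}"
      "x = {Inr e1, Inr f1}" "Inr e \<in> x" by blast
    then consider "x = {Inr e, Inr f1}" "f1 \<in> edges G" "f1 \<noteq> e" "e \<inter> f1 \<noteq> {}"
      | "x = {Inr e, Inr e1}" "e1 \<in> edges G" "e1 \<noteq> e" "e \<inter> e1 \<noteq> {}"
      by (auto simp: insert_commute)
    then show "x \<in> (\<lambda>f. {Inr e, Inr f}) ` ({f \<in> edges G. u \<in> f} \<union> {f \<in> edges G. v \<in> f} - {e})"
    proof cases
      case 1
      then have "f1 \<in> {f \<in> edges G. u \<in> f} \<union> {f \<in> edges G. v \<in> f} - {e}"
        using assms(2) by auto
      then show ?thesis by (rule rev_image_eqI) (simp add: 1)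
    next
      case 2
      then have "e1 \<in> {f \<in> edges G. u \<in> f} \<union> {f \<in> edges G. v \<in> f} - {e}"
        using assms(2) by auto
      then show ?thesis by (rule rev_image_eqI) (simp add: 2)
    qed
  qed (use assms in auto)
  have filter_Un: "{x \<in> A \<union> B \<union> C. P x} = {x \<in> A. P x} \<union> {x \<in> B. P x} \<union> {x \<in> C. P x}"
    for A B C :: "'x set" and P by blast
  show ?thesis unfolding edges_total_graph filter_Un none ends adj by simp
qed

lemma card_adjacent_edges:
  assumes "simple_graph G" "e \<in> edges G" "u \<noteq> v" "e = {u, v}"
  shows "card ({f \<in> edges G. u \<in> f} \<union> {f \<in> edges G. v \<in> f} - {e})
      = degree G u + degree G v - 2"
proof -
  let ?U = "{f \<in> edges G. u \<in> f}" and ?V = "{f \<in> edges G. v \<in> f}"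
  have fE: "finite (edges G)" using simple_graph_finite_edges[OF assms(1)] .
  have "?U \<inter> ?V = {e}"
  proof
    show "?U \<inter> ?V \<subseteq> {e}"
    proof
      fix f assume f: "f \<in> ?U \<inter> ?V"
      then obtain a b where "a \<noteq> b" "f = {a, b}"
        using simple_graph_edgeE[OF assms(1)] by blast
      with f assms(3,4) show "f \<in> {e}" by auto
    qed
  qed (use assms in auto)
  moreover have "card (?U \<union> ?V) + card (?U \<inter> ?V) = card ?U + card ?V"
    using card_Un_Int[of ?U ?V] fE by simp
  moreover have "e \<in> ?U \<union> ?V" using assms by simp
  ultimately show ?thesis using fE by (simp add: degree_def)
qed

lemma degree_total_graph_Inr:
  assumes "simple_graph G" "e \<in> edges G"
  shows "degree (total_graph G) (Inr e) = (\<Sum>x\<in>e. degree G x)"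
proof -
  obtain u v where uv: "u \<noteq> v" "e = {u, v}" using simple_graph_edgeE[OF assms] by metis
  let ?B = "{f \<in> edges G. u \<in> f} \<union> {f \<in> edges G. v \<in> f} - {e}"
  let ?ends = "{{Inl u, Inr e}, {Inl v, Inr e}}" and ?adj = "(\<lambda>f. {Inr e, Inr f :: 'a + 'a set}) ` ?B"
  have "degree (total_graph G) (Inr e) = card ?ends + card ?adj"
    unfolding degree_def incident_edges_total_graph_Inr[OF assms(2) uv(2)]
    using simple_graph_finite_edges[OF assms(1)] by (subst card_Un_disjoint) auto
  moreover have "card ?ends = 2"
    using uv by (auto simp: doubleton_eq_iff)
  moreover have "card ?adj = card ?B"
    by (rule card_image) (auto simp: inj_on_def doubleton_eq_iff)
  moreover have "degree G u \<ge> 1" "degree G v \<ge> 1"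
    using assms uv simple_graph_finite_edges[OF assms(1)]
    by (auto simp: degree_def intro!: Suc_leI card_gt_0_iff[THEN iffD2])
  ultimately show ?thesis using card_adjacent_edges[OF assms uv] uv by simp
qed

lemma verts_edge_T_join:
  "verts (edge_T_join G1 G2) = Inl ` verts (total_graph G1) \<union> Inr ` verts G2"
  by (simp add: verts_def edge_T_join_def)

lemma edges_edge_T_join: "edges (edge_T_join G1 G2) =
     (\<lambda>e. Inl ` e) ` edges (total_graph G1)
     \<union> (\<lambda>e. Inr ` e) ` edges G2
     \<union> {{Inl (Inr e), Inr w} | e w. e \<in> edges G1 \<and> w \<in> verts G2}"
  by (simp add: edges_def edge_T_join_def)

lemma degree_edge_T_join_Inl_Inl:
  "degree (edge_T_join G1 G2) (Inl (Inl v)) = degree (total_graph G1) (Inl v)"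
proof -
  have "{x \<in> edges (edge_T_join G1 G2). Inl (Inl v) \<in> x}
      = {x \<in> (\<lambda>e. Inl ` e) ` edges (total_graph G1). Inl (Inl v) \<in> x}"
    unfolding edges_edge_T_join by auto
  then show ?thesis unfolding degree_def by (simp add: incident_edges_image)
qed

lemma degree_edge_T_join_Inl_Inr:
  assumes "simple_graph G1" "simple_graph G2" "e \<in> edges G1"
  shows "degree (edge_T_join G1 G2) (Inl (Inr e))
      = degree (total_graph G1) (Inr e) + card (verts G2)"
proof -
  let ?A = "{x \<in> (\<lambda>f. Inl ` f) ` edges (total_graph G1). Inl (Inr e) \<in> x}"
  let ?B = "(\<lambda>w. {Inl (Inr e), Inr w}) ` verts G2"
  have incident: "{x \<in> edges (edge_T_join G1 G2). Inl (Inr e) \<in> x} = ?A \<union> ?B"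
    unfolding edges_edge_T_join using assms(3) by auto
  have "card ?B = card (verts G2)"
    by (rule card_image) (auto simp: inj_on_def doubleton_eq_iff)
  moreover have "finite ?A" using finite_edges_total_graph[OF assms(1)] by simp
  moreover have "finite ?B" using assms(2) by (simp add: simple_graph_def)
  ultimately show ?thesis unfolding degree_def incident
    by (subst card_Un_disjoint) (auto simp: incident_edges_image)
qed

lemma degree_edge_T_join_Inr:
  assumes "simple_graph G1" "simple_graph G2" "w \<in> verts G2"
  shows "degree (edge_T_join G1 G2) (Inr w) = degree G2 w + card (edges G1)"
proof -
  let ?A = "{x \<in> (\<lambda>f. Inr ` f) ` edges G2. Inr w \<in> x}"
  let ?B = "(\<lambda>e. {Inl (Inr e), Inr w}) ` edges G1"
  have incident: "{x \<in> edges (edge_T_join G1 G2). Inr w \<in> x} = ?A \<union> ?B"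
    unfolding edges_edge_T_join using assms(3) by auto
  have "card ?B = card (edges G1)"
    by (rule card_image) (auto simp: inj_on_def doubleton_eq_iff)
  moreover have "finite ?A" using simple_graph_finite_edges[OF assms(2)] by simp
  moreover have "finite ?B" using simple_graph_finite_edges[OF assms(1)] by simp
  ultimately show ?thesis unfolding degree_def incident
    by (subst card_Un_disjoint) (auto simp: incident_edges_image)
qed

lemma Fidx_edge_T_join:
  assumes "simple_graph G1" "simple_graph G2"
  shows "Fidx (edge_T_join G1 G2) = (\<Sum>v\<in>verts G1. (2 * degree G1 v) ^ 3)
      + (\<Sum>e\<in>edges G1. ((\<Sum>x\<in>e. degree G1 x) + card (verts G2)) ^ 3)
      + (\<Sum>w\<in>verts G2. (degree G2 w + card (edges G1)) ^ 3)"
    (is "_ = ?rhs")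
proof -
  let ?J = "edge_T_join G1 G2"
  have vJ: "verts ?J = Inl ` Inl ` verts G1 \<union> Inl ` Inr ` edges G1 \<union> Inr ` verts G2"
    unfolding verts_edge_T_join verts_total_graph by (simp add: image_Un)
  have "finite (verts G1)" "finite (verts G2)"
    using assms by (simp_all add: simple_graph_def)
  moreover have "finite (edges G1)" using simple_graph_finite_edges[OF assms(1)] .
  ultimately have "Fidx ?J = (\<Sum>x\<in>Inl ` Inl ` verts G1. degree ?J x ^ 3)
      + (\<Sum>x\<in>Inl ` Inr ` edges G1. degree ?J x ^ 3) + (\<Sum>x\<in>Inr ` verts G2. degree ?J x ^ 3)"
    unfolding Fidx_def vJ by (subst sum.union_disjoint; auto)+
  also have "\<dots> = (\<Sum>v\<in>verts G1. degree ?J (Inl (Inl v)) ^ 3)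
      + (\<Sum>e\<in>edges G1. degree ?J (Inl (Inr e)) ^ 3) + (\<Sum>w\<in>verts G2. degree ?J (Inr w) ^ 3)"
    by (simp add: sum.reindex inj_on_def)
  also have "\<dots> = ?rhs"
    by (simp add: degree_edge_T_join_Inl_Inl degree_total_graph_Inl[OF assms(1)]
        degree_edge_T_join_Inl_Inr[OF assms] degree_total_graph_Inr[OF assms(1)]
        degree_edge_T_join_Inr[OF assms])
  finally show ?thesis .
qed

theorem theorem8:
  fixes G1 :: "'a graph" and G2 :: "'b graph"
  assumes "simple_graph G1" and "connected_graph G1"
    and "simple_graph G2" and "connected_graph G2"
  shows "Fidx (edge_T_join G1 G2) =
      8 * Fidx G1 + Fidx G2 + 3 * (card (verts G2))^2 * M1 G1
      + 3 * card (edges G1) * M1 G2 + M4 G1 + 3 * card (verts G2) * HM G1 + 3 * ReZM G1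
      + (card (edges G1))^2 * (6 * card (edges G2) + card (edges G1) * card (verts G2))
      + card (edges G1) * (card (verts G2))^3"
  unfolding Fidx_edge_T_join[OF assms(1,3)] sum_cube_double_degree
    sum_edges_cube_degree_sum_add[OF assms(1)] sum_cube_degree_add[OF assms(3)]
  by (simp add: algebra_simps power2_eq_square power3_eq_cube)

end
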